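(* For any integers $n\ge1$ and $0<r\le n$, there is an $r$-covering code $C\subseteq2^n$ with $$|C|=S:=\left\lceil\ln(2)(n+1)\frac{2^n}{V(n,r)}\right\rceil$$ such that for every integer $q\in[r,n]$ and every $\tau\in2^n$, $$|B_q(\tau)\cap C|<S_q:=\left\lceil5(n+1)\frac{V(n,q)}{V(n,r)}\right\rceil.$$
   Context: For $\sigma,\tau\in2^n$, $\Delta(\sigma,\tau)$ is the Hamming distance (number of differing positions), $B_q(\tau)=\{\sigma\in2^n:\Delta(\sigma,\tau)\le q\}$ and $V(n,q)=|B_q(\tau)|=\sum_{i\le q}\binom ni$. A code $C\subseteq2^n$ is $r$-covering if for every $\tau\in2^n$ there is $\sigma\in C$ with $\Delta(\tau,\sigma)\le r$. *)

theory Defs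
  imports Complex_Main
begin

definition cube :: "nat \<Rightarrow> bool list set" where
  "cube n = {xs. length xs = n}"

definition hdist :: "bool list \<Rightarrow> bool list \<Rightarrow> nat" where
  "hdist s t = card {i. i < length s \<and> s ! i \<noteq> t ! i}"

definition hball :: "nat \<Rightarrow> nat \<Rightarrow> bool list \<Rightarrow> bool list set" where
  "hball n q t = {s \<in> cube n. hdist s t \<le> q}"

definition V :: "nat \<Rightarrow> nat \<Rightarrow> nat" where
  "V n q = (\<Sum>i\<le>q. n choose i)"

definition covering :: "nat \<Rightarrow> nat \<Rightarrow> bool list set \<Rightarrow> bool" where
  "covering n r C \<longleftrightarrow> C \<subseteq> cube n \<and> (\<forall>t\<in>cube n. \<exists>s\<in>C. hdist t s \<le> r)"

end

theory Submission
  imports Defs "HOL-Analysis.Harmonic_Numbers"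
begin

text \<open>Choose an S-element subset C of the cube 2^n uniformly at random. A ball of radius r
  has V(n,r) points, so it misses C with probability at most
  (1 - S/2^n)^V(n,r) \<le> exp(-S V(n,r)/2^n) \<le> 2^-(n+1).
  A ball of radius q contains k \<ge> S_q points of C with probability at most
  binom(V(n,q),k) (S/2^n)^k \<le> (e V(n,q) S/(2^n k))^k \<le> (3/4)^k \<le> 4^-(n+1).
  A union bound over the 2^n centres and the at most n radii q leaves positive probability
  for a code that covers and is nowhere too dense. Probabilities are expressed by counting
  S-element subsets.\<close>

section \<open>Binomial estimates\<close>

lemma power_div_fact_le_exp:
  fixes x :: real
  assumes "0 \<le> x"
  shows "x ^ k / fact k \<le> exp x"
proof -
  have "summable (\<lambda>n. x ^ n / fact n)"
    using summable_exp_generic[of x] by (simp add: divide_inverse ac_simps)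
  then have "(\<Sum>n\<in>{k}. x ^ n / fact n) \<le> (\<Sum>n. x ^ n / fact n)"
    by (rule sum_le_suminf) (use assms in auto)
  then show ?thesis
    by (simp add: exp_def divide_inverse ac_simps)
qed

lemma power_self_le_exp_mult_fact: "real k ^ k \<le> exp (real k) * fact k"
  using power_div_fact_le_exp[of "real k" k] by (simp add: divide_le_eq)

lemma choose_diff_diff_le:
  assumes "k \<le> S" "S \<le> N"
  shows "real ((N - k) choose (S - k)) \<le> real (N choose S) * (real S / real N) ^ k"
  using assms
proof (induction k)
  case 0
  then show ?case by simp
next
  case (Suc k)
  define m where "m = N - Suc k"
  define j where "j = S - Suc k"
  have mk: "N - k = Suc m" and jk: "S - k = Suc j"
    using Suc.prems by (auto simp: m_def j_def)
  have "Suc j * (Suc m choose Suc j) = Suc m * (m choose j)"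
    using binomial_absorption[of j "Suc m"] by simp
  then have "real (Suc j) * real (Suc m choose Suc j) = real (Suc m) * real (m choose j)"
    by (metis of_nat_mult)
  then have step: "real (m choose j) = real (Suc m choose Suc j) * (real (Suc j) / real (Suc m))"
    by (simp add: divide_simps del: of_nat_Suc) (simp add: mult.commute)
  have ratio: "real (Suc j) / real (Suc m) \<le> real S / real N"
  proof -
    have diffs: "real (Suc j) = real S - real k" "real (Suc m) = real N - real k"
      using mk jk Suc.prems by (simp_all add: of_nat_diff[symmetric])
    have "real (Suc j) * real N \<le> real S * real (Suc m)"
      unfolding diffs using Suc.prems by (simp add: algebra_simps mult_right_mono)
    then show ?thesis
      using Suc.prems by (simp add: divide_simps del: of_nat_Suc)
  qed
  have IH: "real (Suc m choose Suc j) \<le> real (N choose S) * (real S / real N) ^ k"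
    using Suc.IH Suc.prems mk jk by simp
  have "real ((N - Suc k) choose (S - Suc k)) = real (Suc m choose Suc j) * (real (Suc j) / real (Suc m))"
    unfolding m_def[symmetric] j_def[symmetric] by (rule step)
  also have "\<dots> \<le> real (N choose S) * (real S / real N) ^ k * (real S / real N)"
    by (rule mult_mono[OF IH ratio]) auto
  finally show ?case
    by (simp add: ac_simps)
qed

lemma choose_diff_le:
  assumes "v \<le> N" "S \<le> N"
  shows "real ((N - v) choose S) \<le> real (N choose S) * (1 - real S / real N) ^ v"
  using assms
proof (induction v)
  case 0
  then show ?case by simp
next
  case (Suc v)
  define m where "m = N - v"
  have m: "1 \<le> m" "m \<le> N"
    using Suc.prems by (auto simp: m_def)
  have step: "real ((N - Suc v) choose S) = real (m choose S) * (real (m - S) / real m)"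
    using arg_cong[OF binomial_absorb_comp[of m S], of real] m by (simp add: m_def field_simps)
  have ratio: "real (m - S) / real m \<le> 1 - real S / real N"
  proof (cases "S \<le> m")
    case True
    then have "real (m - S) / real m = 1 - real S / real m"
      using m by (simp add: of_nat_diff field_simps)
    also have "\<dots> \<le> 1 - real S / real N"
      using m by (intro diff_left_mono divide_left_mono) auto
    finally show ?thesis .
  next
    case False
    then show ?thesis
      using m Suc.prems by (simp add: field_simps)
  qed
  have "real ((N - Suc v) choose S) \<le> real (m choose S) * (1 - real S / real N)"
    unfolding step by (intro mult_left_mono ratio) simp
  also have "\<dots> \<le> real (N choose S) * (1 - real S / real N) ^ v * (1 - real S / real N)"
    using Suc by (intro mult_right_mono) (simp_all add: m_def divide_le_eq_1)
  finally show ?case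
    by (simp add: ac_simps)
qed

section \<open>Counting subsets\<close>

lemma card_subsets_card_le:
  assumes "finite A"
  shows "card {D. D \<subseteq> A \<and> card D \<le> q} = (\<Sum>i\<le>q. card A choose i)"
proof -
  have "{D. D \<subseteq> A \<and> card D \<le> q} = (\<Union>i\<le>q. {D. D \<subseteq> A \<and> card D = i})"
    by auto
  also have "card \<dots> = (\<Sum>i\<le>q. card {D. D \<subseteq> A \<and> card D = i})"
    using assms by (intro card_UN_disjoint) (auto intro: finite_subset)
  finally show ?thesis
    using n_subsets[OF assms] by simp
qed

lemma card_subsets_disjoint:
  assumes "finite X" "B \<subseteq> X"
  shows "card {C. C \<subseteq> X \<and> card C = S \<and> C \<inter> B = {}} = (card X - card B) choose S"
proof -
  have "{C. C \<subseteq> X \<and> card C = S \<and> C \<inter> B = {}} = {C. C \<subseteq> X - B \<and> card C = S}"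
    by auto
  then show ?thesis
    using n_subsets[of "X - B" S] assms by (simp add: card_Diff_subset finite_subset)
qed

lemma card_subsets_superset_le:
  assumes "finite X" "K \<subseteq> X" "card K = k"
  shows "card {C. C \<subseteq> X \<and> card C = S \<and> K \<subseteq> C} \<le> (card X - k) choose (S - k)"
proof -
  have fin: "finite K"
    using assms finite_subset by blast
  have "{C. C \<subseteq> X \<and> card C = S \<and> K \<subseteq> C} \<subseteq> (\<lambda>D. D \<union> K) ` {D. D \<subseteq> X - K \<and> card D = S - k}"
  proof
    fix C
    assume C: "C \<in> {C. C \<subseteq> X \<and> card C = S \<and> K \<subseteq> C}"
    then have "card (C - K) = S - k"
      using assms card_Diff_subset[OF fin] finite_subset by auto
    moreover have "C = (C - K) \<union> K"
      using C by auto
    ultimately show "C \<in> (\<lambda>D. D \<union> K) ` {D. D \<subseteq> X - K \<and> card D = S - k}"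
      using C by blast
  qed
  then have "card {C. C \<subseteq> X \<and> card C = S \<and> K \<subseteq> C} \<le> card ((\<lambda>D. D \<union> K) ` {D. D \<subseteq> X - K \<and> card D = S - k})"
    using assms by (intro card_mono) (auto intro!: finite_imageI)
  also have "\<dots> \<le> card {D. D \<subseteq> X - K \<and> card D = S - k}"
    by (rule card_image_le) (use assms in auto)
  also have "\<dots> = (card X - k) choose (S - k)"
    using n_subsets[of "X - K" "S - k"] assms by (simp add: card_Diff_subset fin)
  finally show ?thesis .
qed

lemma card_subsets_meeting_le:
  assumes "finite X" "B \<subseteq> X"
  shows "card {C. C \<subseteq> X \<and> card C = S \<and> k \<le> card (B \<inter> C)} \<le> (card B choose k) * ((card X - k) choose (S - k))"
proof -
  let ?K = "{K. K \<subseteq> B \<and> card K = k}"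
  have fin: "finite B" "finite ?K"
    using assms finite_subset by (blast, simp add: finite_subset)
  have "{C. C \<subseteq> X \<and> card C = S \<and> k \<le> card (B \<inter> C)} \<subseteq> (\<Union>K\<in>?K. {C. C \<subseteq> X \<and> card C = S \<and> K \<subseteq> C})"
  proof
    fix C
    assume C: "C \<in> {C. C \<subseteq> X \<and> card C = S \<and> k \<le> card (B \<inter> C)}"
    then obtain K where "K \<subseteq> B \<inter> C" "card K = k"
      using obtain_subset_with_card_n by blast
    with C show "C \<in> (\<Union>K\<in>?K. {C. C \<subseteq> X \<and> card C = S \<and> K \<subseteq> C})"
      by blast
  qed
  then have "card {C. C \<subseteq> X \<and> card C = S \<and> k \<le> card (B \<inter> C)}
      \<le> card (\<Union>K\<in>?K. {C. C \<subseteq> X \<and> card C = S \<and> K \<subseteq> C})"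
    using fin assms by (intro card_mono) (auto intro: finite_subset)
  also have "\<dots> \<le> (\<Sum>K\<in>?K. card {C. C \<subseteq> X \<and> card C = S \<and> K \<subseteq> C})"
    by (rule card_UN_le[OF fin(2)])
  also have "\<dots> \<le> (\<Sum>K\<in>?K. (card X - k) choose (S - k))"
    using assms by (intro sum_mono card_subsets_superset_le) auto
  also have "\<dots> = (card B choose k) * ((card X - k) choose (S - k))"
    using n_subsets[OF fin(1)] by simp
  finally show ?thesis .
qed

text \<open>Divided by card X choose S, the next two bounds are the probabilities that a uniformly
  random S-subset of X misses B, respectively meets B in at least k points.\<close>

lemma card_subsets_disjoint_le_exp:
  assumes "finite X" "B \<subseteq> X" "S \<le> card X"
  shows "real (card {C. C \<subseteq> X \<and> card C = S \<and> C \<inter> B = {}})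
    \<le> real (card X choose S) * exp (- real S * real (card B) / real (card X))"
proof -
  let ?p = "real S / real (card X)"
  have "real (card {C. C \<subseteq> X \<and> card C = S \<and> C \<inter> B = {}}) \<le> real (card X choose S) * (1 - ?p) ^ card B"
    using card_subsets_disjoint[OF assms(1,2)] choose_diff_le[OF card_mono[OF assms(1,2)] assms(3)] by simp
  also have "\<dots> \<le> real (card X choose S) * exp (- ?p) ^ card B"
    using assms(3) exp_ge_add_one_self[of "- ?p"]
    by (intro mult_left_mono power_mono) (auto simp: divide_le_eq_1)
  also have "exp (- ?p) ^ card B = exp (- real S * real (card B) / real (card X))"
    by (simp flip: exp_of_nat_mult)
  finally show ?thesis .
qed

lemma card_subsets_meeting_le_power:
  assumes "finite X" "B \<subseteq> X" "S \<le> card X" "0 < k"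
  shows "real (card {C. C \<subseteq> X \<and> card C = S \<and> k \<le> card (B \<inter> C)})
    \<le> real (card X choose S) * (exp 1 * real (card B) * real S / (real (card X) * real k)) ^ k"
proof (cases "k \<le> S")
  case False
  have "card (B \<inter> C) < k" if "C \<subseteq> X" "card C = S" for C
    using that False assms(1) by (metis card_mono finite_subset inf_le2 le_less_trans not_le)
  then have none: "{C. C \<subseteq> X \<and> card C = S \<and> k \<le> card (B \<inter> C)} = {}"
    using not_le by blast
  show ?thesis
    unfolding none by simp
next
  case True
  let ?b = "real (card B)" and ?p = "real S / real (card X)"
  have "real (card {C. C \<subseteq> X \<and> card C = S \<and> k \<le> card (B \<inter> C)})
      \<le> real (card B choose k) * real ((card X - k) choose (S - k))"
    using card_subsets_meeting_le[OF assms(1,2), of S k] by (simp flip: of_nat_mult)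
  also have "\<dots> \<le> ?b ^ k / fact k * (real (card X choose S) * ?p ^ k)"
  proof (rule mult_mono)
    show "real (card B choose k) \<le> ?b ^ k / fact k"
    proof -
      have "real (card B choose k) * fact k \<le> ?b ^ k"
        using binomial_fact_pow[of "card B" k] by (metis of_nat_fact of_nat_le_iff of_nat_mult of_nat_power)
      then show ?thesis
        by (simp add: le_divide_eq)
    qed
    show "real ((card X - k) choose (S - k)) \<le> real (card X choose S) * ?p ^ k"
      using choose_diff_diff_le[OF True assms(3)] .
  qed auto
  also have "\<dots> \<le> ?b ^ k * (exp (real k) / real k ^ k) * (real (card X choose S) * ?p ^ k)"
  proof (intro mult_right_mono)
    have "1 / fact k \<le> exp (real k) / real k ^ k"
      using power_self_le_exp_mult_fact[of k] assms(4) by (simp add: divide_simps)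
    then show "?b ^ k / fact k \<le> ?b ^ k * (exp (real k) / real k ^ k)"
      using mult_left_mono[of _ _ "?b ^ k"] by (simp add: divide_inverse)
  qed simp
  also have "\<dots> = real (card X choose S) * (exp 1 * ?b * real S / (real (card X) * real k)) ^ k"
  proof -
    have "exp (real k) = exp 1 ^ k"
      using exp_of_nat_mult[of k 1] by simp
    then show ?thesis
      by (simp add: power_mult_distrib power_divide mult_ac)
  qed
  finally show ?thesis .
qed

lemma ex_notin_UN_if_sum_card_less:
  assumes "finite I" "\<And>i. i \<in> I \<Longrightarrow> finite (B i)" "(\<Sum>i\<in>I. card (B i)) < card A"
  shows "\<exists>a\<in>A. \<forall>i\<in>I. a \<notin> B i"
proof (rule ccontr)
  assume "\<not> (\<exists>a\<in>A. \<forall>i\<in>I. a \<notin> B i)"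
  then have "A \<subseteq> (\<Union>i\<in>I. B i)"
    by blast
  then have "card A \<le> card (\<Union>i\<in>I. B i)"
    using assms(1,2) by (intro card_mono) auto
  also have "\<dots> \<le> (\<Sum>i\<in>I. card (B i))"
    using assms(1) by (rule card_UN_le)
  finally show False
    using assms(3) by simp
qed

section \<open>Hamming balls\<close>

lemma finite_cube: "finite (cube n)"
  using finite_lists_length_eq[of "UNIV :: bool set" n] by (simp add: cube_def)

lemma card_cube: "card (cube n) = 2 ^ n"
  using card_lists_length_eq[of "UNIV :: bool set" n] by (simp add: cube_def)

lemma hdist_sym: "length s = length t \<Longrightarrow> hdist s t = hdist t s"
  unfolding hdist_def by metis

lemma covering_iff_hball_meets:
  assumes "C \<subseteq> cube n"
  shows "covering n r C \<longleftrightarrow> (\<forall>\<tau>\<in>cube n. C \<inter> hball n r \<tau> \<noteq> {})"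
proof -
  have "C \<inter> hball n r \<tau> = {s \<in> C. hdist \<tau> s \<le> r}" if "\<tau> \<in> cube n" for \<tau>
  proof -
    have "hdist \<tau> s = hdist s \<tau>" if "s \<in> C" for s
      using that \<open>\<tau> \<in> cube n\<close> assms by (intro hdist_sym) (auto simp: cube_def)
    then show ?thesis
      using assms by (auto simp: hball_def)
  qed
  then show ?thesis
    using assms by (auto simp: covering_def)
qed

text \<open>A word s is determined by the set of positions where it differs from the centre \<tau>,
  and the Hamming distance is the size of that set.\<close>
lemma card_hball:
  assumes "\<tau> \<in> cube n"
  shows "card (hball n q \<tau>) = V n q"
proof -
  define diff where "diff s = {i. i < n \<and> s ! i \<noteq> \<tau> ! i}" for s
  have hdist_eq: "hdist s \<tau> = card (diff s)" if "s \<in> cube n" for s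
    using that by (simp add: hdist_def diff_def cube_def)
  have "inj_on diff (cube n)"
  proof (rule inj_onI)
    fix s s'
    assume s: "s \<in> cube n" "s' \<in> cube n" "diff s = diff s'"
    show "s = s'"
    proof (rule nth_equalityI)
      show "length s = length s'"
        using s by (simp add: cube_def)
      fix i
      assume "i < length s"
      then have "i \<in> diff s \<longleftrightarrow> i \<in> diff s'"
        using s by (simp add: cube_def)
      then show "s ! i = s' ! i"
        using \<open>i < length s\<close> s(1) by (auto simp: diff_def cube_def)
    qed
  qed
  then have inj: "inj_on diff (hball n q \<tau>)"
    by (rule inj_on_subset) (auto simp: hball_def)
  have "diff ` hball n q \<tau> = {D. D \<subseteq> {..<n} \<and> card D \<le> q}"
  proof (intro equalityI subsetI)
    fix D
    assume "D \<in> diff ` hball n q \<tau>"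
    then show "D \<in> {D. D \<subseteq> {..<n} \<and> card D \<le> q}"
      using hdist_eq by (auto simp: hball_def diff_def)
  next
    fix D
    assume D: "D \<in> {D. D \<subseteq> {..<n} \<and> card D \<le> q}"
    define s where "s = map (\<lambda>i. (i \<in> D) \<noteq> \<tau> ! i) [0..<n]"
    have "s \<in> cube n" "diff s = D"
      using D by (auto simp: s_def cube_def diff_def)
    then show "D \<in> diff ` hball n q \<tau>"
      using hdist_eq D by (auto simp: hball_def)
  qed
  then show ?thesis
    using card_image[OF inj] card_subsets_card_le[of "{..<n}" q] by (simp add: V_def)
qed

lemma V_pos: "0 < V n q"
  unfolding V_def by (simp add: sum_pos2[of _ 0])

lemma Suc_le_V: "0 < q \<Longrightarrow> n + 1 \<le> V n q"
  using sum_mono2[of "{..q}" "{..1}" "\<lambda>i. n choose i"] by (simp add: V_def)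

lemma V_mono: "q \<le> q' \<Longrightarrow> V n q \<le> V n q'"
  unfolding V_def by (rule sum_mono2) auto

lemma V_le_power: "V n q \<le> 2 ^ n"
proof -
  have "V n q = card (hball n q (replicate n False))"
    by (simp add: card_hball cube_def)
  also have "\<dots> \<le> card (cube n)"
    by (rule card_mono[OF finite_cube]) (auto simp: hball_def)
  finally show ?thesis
    by (simp add: card_cube)
qed

section \<open>Random codes\<close>

lemma card_codes_missing_ball_le:
  assumes "\<tau> \<in> cube n" "S \<le> 2 ^ n"
    and "ln 2 * real (n + 1) * 2 ^ n / real (V n r) \<le> real S"
  shows "real (card {C. C \<subseteq> cube n \<and> card C = S \<and> C \<inter> hball n r \<tau> = {}})
    \<le> real (2 ^ n choose S) / 2 ^ (n + 1)"
proof -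
  have ball: "hball n r \<tau> \<subseteq> cube n" "card (hball n r \<tau>) = V n r"
    using card_hball[OF assms(1)] by (auto simp: hball_def)
  have "ln 2 * real (n + 1) \<le> real S * real (V n r) / 2 ^ n"
    using assms(3) V_pos[of n r] by (simp add: field_simps)
  then have "exp (- real S * real (V n r) / 2 ^ n) \<le> exp (- (real (n + 1) * ln 2))"
    by (simp add: mult.commute)
  also have "\<dots> = 1 / 2 ^ (n + 1)"
  proof -
    have "exp (real (n + 1) * ln 2) = 2 ^ (n + 1)"
      by (subst exp_of_nat_mult) simp
    then show ?thesis
      by (simp add: exp_minus inverse_eq_divide)
  qed
  finally have decay: "exp (- real S * real (V n r) / 2 ^ n) \<le> 1 / 2 ^ (n + 1)" .
  have "real (card {C. C \<subseteq> cube n \<and> card C = S \<and> C \<inter> hball n r \<tau> = {}})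
      \<le> real (2 ^ n choose S) * exp (- real S * real (V n r) / 2 ^ n)"
    using card_subsets_disjoint_le_exp[OF finite_cube ball(1), of S] ball(2) assms(2)
    by (simp add: card_cube)
  also have "\<dots> \<le> real (2 ^ n choose S) * (1 / 2 ^ (n + 1))"
    using decay by (rule mult_left_mono) simp
  finally show ?thesis
    by simp
qed

lemma load_ratio_le:
  assumes "0 < r" "r \<le> q" "q \<le> n"
    and "real S < ln 2 * real (n + 1) * 2 ^ n / real (V n r) + 1"
    and "5 * real (n + 1) * real (V n q) / real (V n r) \<le> real k"
  shows "5 * (n + 1) \<le> k" and "exp 1 * real (V n q) * real S / (2 ^ n * real k) \<le> 3/4"
proof -
  define x where "x = real (n + 1) * (real (V n q) / real (V n r))"
  have Vr: "real (n + 1) \<le> real (V n r)" "real (V n r) \<le> real (V n q)"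
    using Suc_le_V[OF assms(1), where n = n] V_mono[OF assms(2), where n = n] by simp_all
  have "real (V n q) \<le> real (2 ^ n)"
    using V_le_power by (rule of_nat_mono)
  then have Vq: "real (V n q) \<le> 2 ^ n"
    by simp
  have x_ge: "real (n + 1) \<le> x"
    using Vr V_pos[of n r] mult_left_mono[of 1 "real (V n q) / real (V n r)" "real (n + 1)"]
    by (simp add: x_def le_divide_eq)
  then have two_le_x: "2 \<le> x"
    using assms(1-3) by simp
  have k_ge: "5 * x \<le> real k"
    using assms(5) by (simp add: x_def field_simps)
  have "real (5 * (n + 1)) \<le> real k"
    using x_ge k_ge by simp
  then show "5 * (n + 1) \<le> k"
    by (simp only: of_nat_le_iff)
  have "real (V n q) * real S / 2 ^ n \<le> real (V n q) * (ln 2 * real (n + 1) * 2 ^ n / real (V n r) + 1) / 2 ^ n"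
    using assms(4) by (intro divide_right_mono mult_left_mono) simp_all
  also have "\<dots> = ln 2 * x + real (V n q) / 2 ^ n"
    using V_pos[of n r] by (simp add: x_def field_simps)
  also have "\<dots> \<le> 25/36 * x + 1"
    using ln2_le_25_over_36 two_le_x Vq by (intro add_mono mult_right_mono) simp_all
  finally have "exp 1 * (real (V n q) * real S / 2 ^ n) \<le> 3 * (25/36 * x + 1)"
    using exp_le by (intro mult_mono) simp_all
  also have "\<dots> \<le> 3/4 * real k"
    using two_le_x k_ge by simp
  finally show "exp 1 * real (V n q) * real S / (2 ^ n * real k) \<le> 3/4"
    using two_le_x k_ge by (simp add: divide_simps mult_ac)
qed

lemma card_codes_heavy_ball_le:
  assumes "\<tau> \<in> cube n" "0 < r" "r \<le> q" "q \<le> n" "S \<le> 2 ^ n"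
    and "real S < ln 2 * real (n + 1) * 2 ^ n / real (V n r) + 1"
    and "5 * real (n + 1) * real (V n q) / real (V n r) \<le> real k"
  shows "real (card {C. C \<subseteq> cube n \<and> card C = S \<and> k \<le> card (hball n q \<tau> \<inter> C)})
    \<le> real (2 ^ n choose S) / 4 ^ (n + 1)"
proof -
  note k_big = load_ratio_le(1)[OF assms(2-4,6,7)]
  have ball: "hball n q \<tau> \<subseteq> cube n" "card (hball n q \<tau>) = V n q"
    using card_hball[OF assms(1)] by (auto simp: hball_def)
  have "real (card {C. C \<subseteq> cube n \<and> card C = S \<and> k \<le> card (hball n q \<tau> \<inter> C)})
      \<le> real (2 ^ n choose S) * (exp 1 * real (V n q) * real S / (2 ^ n * real k)) ^ k"
    using card_subsets_meeting_le_power[OF finite_cube ball(1), of S k] ball(2) assms(5) k_big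
    by (simp add: card_cube)
  also have "\<dots> \<le> real (2 ^ n choose S) * (3/4) ^ k"
    using load_ratio_le(2)[OF assms(2-4,6,7)] by (intro mult_left_mono power_mono) simp_all
  also have "\<dots> \<le> real (2 ^ n choose S) * (3/4) ^ (5 * (n + 1))"
    using k_big by (intro mult_left_mono power_decreasing) simp_all
  also have "\<dots> \<le> real (2 ^ n choose S) * (1/4) ^ (n + 1)"
    \<comment> \<open>(3/4)^5 < 1/4 is what the factor 5 in S_q pays for\<close>
  proof (rule mult_left_mono)
    have "(3/4::real) ^ (5 * (n + 1)) = ((3/4) ^ 5) ^ (n + 1)"
      by (rule power_mult)
    also have "\<dots> \<le> (1/4) ^ (n + 1)"
      by (rule power_mono) (simp_all add: power_divide)
    finally show "(3/4::real) ^ (5 * (n + 1)) \<le> (1/4) ^ (n + 1)" .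
  qed simp
  finally show ?thesis
    by (simp add: power_divide)
qed

definition code_size :: "nat \<Rightarrow> nat \<Rightarrow> nat" where
  "code_size n r = nat \<lceil>ln 2 * real (n + 1) * 2 ^ n / real (V n r)\<rceil>"

definition load_bound :: "nat \<Rightarrow> nat \<Rightarrow> nat \<Rightarrow> nat" where
  "load_bound n r q = nat \<lceil>5 * real (n + 1) * real (V n q) / real (V n r)\<rceil>"

definition bad_codes :: "nat \<Rightarrow> nat \<Rightarrow> bool list \<Rightarrow> bool list set set" where
  "bad_codes n r \<tau> = {C. C \<subseteq> cube n \<and> card C = code_size n r \<and>
     (C \<inter> hball n r \<tau> = {} \<or> (\<exists>q\<in>{r..n}. load_bound n r q \<le> card (hball n q \<tau> \<inter> C)))}"

lemma int_code_size: "int (code_size n r) = \<lceil>ln 2 * real (n + 1) * 2 ^ n / real (V n r)\<rceil>"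
proof -
  have "0 \<le> ln 2 * real (n + 1) * 2 ^ n / real (V n r)"
    by simp
  then have "- 1 < ln 2 * real (n + 1) * 2 ^ n / real (V n r)"
    by linarith
  then show ?thesis
    by (simp add: code_size_def)
qed

lemma code_size_bounds:
  assumes "0 < r"
  shows "ln 2 * real (n + 1) * 2 ^ n / real (V n r) \<le> real (code_size n r)"
    and "real (code_size n r) < ln 2 * real (n + 1) * 2 ^ n / real (V n r) + 1"
    and "code_size n r \<le> 2 ^ n"
proof -
  let ?s = "ln 2 * real (n + 1) * 2 ^ n / real (V n r)"
  have "real (code_size n r) = of_int \<lceil>?s\<rceil>"
    by (metis int_code_size of_int_of_nat_eq)
  then show "?s \<le> real (code_size n r)" "real (code_size n r) < ?s + 1"
    by linarith+
  have "ln 2 * real (n + 1) \<le> 1 * real (V n r)"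
    using ln_2_less_1 Suc_le_V[OF assms, of n] by (intro mult_mono) simp_all
  then have "?s \<le> 2 ^ n"
    using V_pos[of n r] by (simp add: divide_le_eq mult.commute mult_left_mono)
  then show "code_size n r \<le> 2 ^ n"
    unfolding code_size_def by (simp add: nat_le_iff ceiling_le_iff)
qed

lemma card_bad_codes_less:
  assumes "\<tau> \<in> cube n" "0 < r" "r \<le> n"
  shows "real (card (bad_codes n r \<tau>)) < real (2 ^ n choose code_size n r) / 2 ^ n"
proof -
  let ?S = "code_size n r" and ?M = "real (2 ^ n choose code_size n r)"
  let ?miss = "{C. C \<subseteq> cube n \<and> card C = ?S \<and> C \<inter> hball n r \<tau> = {}}"
  let ?heavy = "\<lambda>q. {C. C \<subseteq> cube n \<and> card C = ?S \<and> load_bound n r q \<le> card (hball n q \<tau> \<inter> C)}"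
  have "bad_codes n r \<tau> = ?miss \<union> (\<Union>q\<in>{r..n}. ?heavy q)"
    by (auto simp: bad_codes_def)
  then have "card (bad_codes n r \<tau>) \<le> card ?miss + card (\<Union>q\<in>{r..n}. ?heavy q)"
    by (simp add: card_Un_le)
  also have "\<dots> \<le> card ?miss + (\<Sum>q\<in>{r..n}. card (?heavy q))"
    by (intro add_left_mono card_UN_le) simp
  finally have "real (card (bad_codes n r \<tau>)) \<le> real (card ?miss + (\<Sum>q\<in>{r..n}. card (?heavy q)))"
    by (rule of_nat_mono)
  also have "\<dots> = real (card ?miss) + (\<Sum>q\<in>{r..n}. real (card (?heavy q)))"
    by simp
  also have "\<dots> \<le> ?M / 2 ^ (n + 1) + (\<Sum>q\<in>{r..n}. ?M / 4 ^ (n + 1))"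
  proof (intro add_mono sum_mono)
    show "real (card ?miss) \<le> ?M / 2 ^ (n + 1)"
      using card_codes_missing_ball_le[OF assms(1) code_size_bounds(3,1)[OF assms(2)]] .
    fix q
    assume "q \<in> {r..n}"
    then show "real (card (?heavy q)) \<le> ?M / 4 ^ (n + 1)"
      using assms code_size_bounds[OF assms(2)] real_nat_ceiling_ge
      by (intro card_codes_heavy_ball_le) (auto simp: load_bound_def)
  qed
  also have "\<dots> = ?M / 2 ^ (n + 1) + real (card {r..n}) * (?M / 4 ^ (n + 1))"
    by simp
  also have "\<dots> \<le> ?M / 2 ^ (n + 1) + real n * (?M / 4 ^ (n + 1))"
    using assms(2) by (intro add_left_mono mult_right_mono) simp_all
  also have "\<dots> < ?M / 2 ^ n"
  proof -
    have "0 < ?M"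
      using code_size_bounds(3)[OF assms(2)] by simp
    moreover have "real n < 2 ^ (n + 1)"
      using less_exp[of n] by (simp add: less_trans[of _ "2 ^ n"])
    moreover have "(4::real) ^ (n + 1) = 2 ^ (n + 1) * 2 ^ (n + 1)"
      by (simp flip: power_mult_distrib)
    ultimately show ?thesis
      by (simp add: field_simps)
  qed
  finally show ?thesis .
qed

lemma exists_code_without_bad_centre:
  assumes "0 < r" "r \<le> n"
  shows "\<exists>C. C \<subseteq> cube n \<and> card C = code_size n r \<and> (\<forall>\<tau>\<in>cube n. C \<notin> bad_codes n r \<tau>)"
proof -
  let ?codes = "{C. C \<subseteq> cube n \<and> card C = code_size n r}"
  let ?M = "real (2 ^ n choose code_size n r)"
  have "real (\<Sum>\<tau>\<in>cube n. card (bad_codes n r \<tau>)) = (\<Sum>\<tau>\<in>cube n. real (card (bad_codes n r \<tau>)))"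
    by simp
  also have "\<dots> < (\<Sum>\<tau>\<in>cube n. ?M / 2 ^ n)"
    using card_bad_codes_less[OF _ assms] finite_cube card_cube[of n]
    by (intro sum_strict_mono) (auto simp flip: card_gt_0_iff)
  also have "\<dots> = real (card ?codes)"
    using n_subsets[OF finite_cube] by (simp add: card_cube)
  finally have less: "(\<Sum>\<tau>\<in>cube n. card (bad_codes n r \<tau>)) < card ?codes"
    by (simp only: of_nat_less_iff)
  have fin: "finite (bad_codes n r \<tau>)" if "\<tau> \<in> cube n" for \<tau>
    by (rule finite_subset[of _ "Pow (cube n)"]) (auto simp: bad_codes_def finite_cube)
  have "\<exists>C\<in>?codes. \<forall>\<tau>\<in>cube n. C \<notin> bad_codes n r \<tau>"
    using ex_notin_UN_if_sum_card_less[OF finite_cube fin less] .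
  then show ?thesis
    by auto
qed

theorem lemma3p1:
  fixes n r :: nat
  assumes "n \<ge> 1" and "0 < r" and "r \<le> n"
  shows "\<exists>C. covering n r C \<and>
     int (card C) = \<lceil>ln 2 * real (n + 1) * 2 ^ n / real (V n r)\<rceil> \<and>
     (\<forall>q. r \<le> q \<and> q \<le> n \<longrightarrow> (\<forall>\<tau>\<in>cube n.
        int (card (hball n q \<tau> \<inter> C)) < \<lceil>5 * real (n + 1) * real (V n q) / real (V n r)\<rceil>))"
proof -
  obtain C where C: "C \<subseteq> cube n" "card C = code_size n r" "\<forall>\<tau>\<in>cube n. C \<notin> bad_codes n r \<tau>"
    using exists_code_without_bad_centre[OF assms(2,3)] by blast
  have "covering n r C"
    using C by (auto simp: covering_iff_hball_meets bad_codes_def)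
  moreover have "int (card C) = \<lceil>ln 2 * real (n + 1) * 2 ^ n / real (V n r)\<rceil>"
    using C(2) int_code_size by simp
  moreover have "int (card (hball n q \<tau> \<inter> C)) < \<lceil>5 * real (n + 1) * real (V n q) / real (V n r)\<rceil>"
    if "r \<le> q \<and> q \<le> n" "\<tau> \<in> cube n" for q \<tau>
  proof -
    have "\<not> load_bound n r q \<le> card (hball n q \<tau> \<inter> C)"
      using C that by (auto simp: bad_codes_def)
    then show ?thesis
      by (simp add: load_bound_def not_le zless_nat_eq_int_zless less_ceiling_iff)
  qed
  ultimately show ?thesis
    by blast
qed

end
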